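(* For every fixed integer $d\ge1$, neither Enum $d$-Cut nor Enum Max-$d$-Cut, parameterized by the vertex cover number $\mathsf{vc}(G)$ or by the neighborhood diversity $\mathsf{nd}(G)$ of the input graph, admits a fully-polynomial enumeration kernel of any size.
   Context: All graphs are finite, simple and undirected. A cut of $G$ is a partition $(A,B)$ of $V(G)$ into two nonempty sets; its edge cut $E_G(A,B)$ is the set of edges with one endpoint in $A$ and the other in $B$. A cut is a $d$-cut if every vertex of $A$ has at most $d$ neighbors in $B$ and every vertex of $B$ has at most $d$ neighbors in $A$; $d$-cuts are identified when their edge cuts coincide. A $d$-cut is maximal if no $d$-cut has edge cut strictly containing its edge cut. Enum $d$-Cut / Enum Max-$d$-Cut: enumerate without duplicates all / all maximal $d$-cuts of $G$. $\mathsf{vc}(G)$ is the vertex cover number; $\mathsf{nd}(G)$ is the minimum number of parts of a partition of $V(G)$ into sets each of which is a clique or independent set whose vertices share the same neighborhood outside the set. A parameterized enumeration problem is a triple $\Pi=(L,\mathsf{Sol},\kappa)$ with $\mathsf{Sol}(x)$ finite, nonempty iff $x\in L$. A fully-polynomial enumeration kernel consists of (i) a kernelization algorithm computing from $x$, in time polynomial in $|x|+\kappa(x)$, an instance $y$ with $|y|+\kappa(y)\le f(\kappa(x))$ for some computable $f$, and (ii) a solution-lifting algorithm that for each $s\in\mathsf{Sol}(y)$ computes, in time polynomial in $|x|+|y|+\kappa(x)+\kappa(y)$, a nonempty $S_s\subseteq\mathsf{Sol}(x)$ such that $\{S_s\}_{s\in\mathsf{Sol}(y)}$ partitions $\mathsf{Sol}(x)$.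 *)

theory Defs
  imports Main
begin

type_synonym graph = "nat set \<times> nat set set"

definition verts :: "graph \<Rightarrow> nat set" where "verts G = fst G"
definition edges :: "graph \<Rightarrow> nat set set" where "edges G = snd G"

definition wf_graph :: "graph \<Rightarrow> bool" where
  "wf_graph G \<longleftrightarrow> finite (verts G) \<and>
     (\<forall>e\<in>edges G. \<exists>u v. e = {u, v} \<and> u \<noteq> v \<and> u \<in> verts G \<and> v \<in> verts G)"

definition nbrs :: "graph \<Rightarrow> nat \<Rightarrow> nat set" where
  "nbrs G v = {u. {u, v} \<in> edges G}"

definition graph_size :: "graph \<Rightarrow> nat" where
  "graph_size G = card (verts G) + card (edges G)"

definition is_cut :: "graph \<Rightarrow> nat set \<Rightarrow> nat set \<Rightarrow> bool" where
  "is_cut G A B \<longleftrightarrow> A \<noteq> {} \<and> B \<noteq> {} \<and> A \<inter> B = {} \<and> A \<union> B = verts G"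

definition edge_cut :: "graph \<Rightarrow> nat set \<Rightarrow> nat set \<Rightarrow> nat set set" where
  "edge_cut G A B = {e \<in> edges G. \<exists>a\<in>A. \<exists>b\<in>B. e = {a, b}}"

definition is_dcut :: "nat \<Rightarrow> graph \<Rightarrow> nat set \<Rightarrow> nat set \<Rightarrow> bool" where
  "is_dcut d G A B \<longleftrightarrow> is_cut G A B \<and>
     (\<forall>a\<in>A. card (nbrs G a \<inter> B) \<le> d) \<and> (\<forall>b\<in>B. card (nbrs G b \<inter> A) \<le> d)"

text \<open>Solutions of Enum d-Cut: d-cuts identified by their edge cuts.\<close>
definition dcuts :: "nat \<Rightarrow> graph \<Rightarrow> nat set set set" where
  "dcuts d G = {edge_cut G A B | A B. is_dcut d G A B}"

definition max_dcuts :: "nat \<Rightarrow> graph \<Rightarrow> nat set set set" where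
  "max_dcuts d G = {F \<in> dcuts d G. \<not> (\<exists>F'\<in>dcuts d G. F \<subset> F')}"

definition vertex_cover :: "graph \<Rightarrow> nat set \<Rightarrow> bool" where
  "vertex_cover G C \<longleftrightarrow> C \<subseteq> verts G \<and> (\<forall>e\<in>edges G. e \<inter> C \<noteq> {})"

definition vc :: "graph \<Rightarrow> nat" where
  "vc G = Min {card C | C. vertex_cover G C}"

definition is_clique :: "graph \<Rightarrow> nat set \<Rightarrow> bool" where
  "is_clique G X \<longleftrightarrow> (\<forall>u\<in>X. \<forall>v\<in>X. u \<noteq> v \<longrightarrow> {u, v} \<in> edges G)"

definition is_indep :: "graph \<Rightarrow> nat set \<Rightarrow> bool" where
  "is_indep G X \<longleftrightarrow> (\<forall>u\<in>X. \<forall>v\<in>X. {u, v} \<notin> edges G)"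

definition nd_partition :: "graph \<Rightarrow> nat set set \<Rightarrow> bool" where
  "nd_partition G P \<longleftrightarrow>
     (\<forall>X\<in>P. X \<noteq> {}) \<and> (\<forall>X\<in>P. \<forall>Y\<in>P. X \<noteq> Y \<longrightarrow> X \<inter> Y = {}) \<and> \<Union>P = verts G \<and>
     (\<forall>X\<in>P. (is_clique G X \<or> is_indep G X) \<and>
             (\<forall>u\<in>X. \<forall>v\<in>X. nbrs G u - X = nbrs G v - X))"

definition nd :: "graph \<Rightarrow> nat" where
  "nd G = Min {card P | P. nd_partition G P}"

text \<open>Polynomial running time of the lifting step is abstracted to its necessary
  consequence that the number of output solutions is polynomially bounded.\<close>

definition fp_enum_kernel ::
  "(graph \<Rightarrow> nat set set set) \<Rightarrow> (graph \<Rightarrow> nat) \<Rightarrow> bool" where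
  "fp_enum_kernel Sol kappa \<longleftrightarrow>
     (\<exists>(K :: graph \<Rightarrow> graph) (L :: graph \<Rightarrow> nat set set \<Rightarrow> nat set set set)
        (f :: nat \<Rightarrow> nat) (c :: nat).
      \<forall>x. wf_graph x \<longrightarrow>
        wf_graph (K x) \<and>
        graph_size (K x) + kappa (K x) \<le> f (kappa x) \<and>
        (\<forall>s\<in>Sol (K x). L x s \<noteq> {} \<and> L x s \<subseteq> Sol x \<and>
           card (L x s) \<le> c * (graph_size x + graph_size (K x) + kappa x + kappa (K x) + 1) ^ c) \<and>
        (\<forall>s\<in>Sol (K x). \<forall>s'\<in>Sol (K x). s \<noteq> s' \<longrightarrow> L x s \<inter> L x s' = {}) \<and>
        (\<Union>s\<in>Sol (K x). L x s) = Sol x)"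

end

(*
  A fully-polynomial enumeration kernel bounds the number of solutions of an instance x
  by F(kappa x) * |x|^c: the kernel has at most 2^f(kappa x) solutions, and each of them
  lifts to polynomially many.  The star forest with k stars of m leaves has vertex cover
  number at most k and neighbourhood diversity at most 2k, but at least (m+1-d)^k maximal
  d-cuts: put the leaves 1, ..., d-1 and one further leaf g(i) >= d of every star i
  opposite its centre.  Every centre then has exactly d cut edges, so no d-cut cuts more
  edges, and different choices of g give different edge cuts.  For k = c+1 stars the count
  (m+1-d)^(c+1) outgrows F(2k) * O(m)^c as m grows.
*)
theory Submission
  imports Defs "HOL-Library.Nat_Bijection" "HOL-Library.FuncSet"
begin

lemma wf_graph_edges_subset: "wf_graph G \<Longrightarrow> edges G \<subseteq> Pow (verts G)"
  unfolding wf_graph_def by fastforce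

lemma finite_edges: "wf_graph G \<Longrightarrow> finite (edges G)"
  by (meson finite_Pow_iff rev_finite_subset wf_graph_def wf_graph_edges_subset)

lemma vc_le_card:
  assumes "wf_graph G" and "vertex_cover G C"
  shows "vc G \<le> card C"
proof -
  have "{card C | C. vertex_cover G C} \<subseteq> card ` Pow (verts G)"
    unfolding vertex_cover_def by blast
  then have "finite {card C | C. vertex_cover G C}"
    using assms(1) unfolding wf_graph_def by (meson finite_Pow_iff finite_imageI finite_subset)
  then show ?thesis
    unfolding vc_def using assms(2) by (intro Min_le) auto
qed

lemma nd_le_card:
  assumes "wf_graph G" and "nd_partition G P"
  shows "nd G \<le> card P"
proof -
  have "\<Union>Q = verts G" if "nd_partition G Q" for Q
    using that unfolding nd_partition_def by blast
  then have "{card P | P. nd_partition G P} \<subseteq> card ` Pow (Pow (verts G))"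
    by blast
  then have "finite {card P | P. nd_partition G P}"
    using assms(1) unfolding wf_graph_def by (meson finite_Pow_iff finite_imageI finite_subset)
  then show ?thesis
    unfolding nd_def using assms(2) by (intro Min_le) auto
qed

lemma card_le_two_power_graph_size:
  assumes "wf_graph G" and "S \<subseteq> Pow (edges G)"
  shows "card S \<le> 2 ^ graph_size G"
proof -
  have "card S \<le> card (Pow (edges G))"
    using assms finite_edges by (intro card_mono) auto
  also have "\<dots> = 2 ^ card (edges G)"
    using finite_edges[OF assms(1)] by (rule card_Pow)
  also have "\<dots> \<le> 2 ^ graph_size G"
    unfolding graph_size_def by (intro power_increasing) auto
  finally show ?thesis .
qed

lemma dcuts_subset_Pow_edges: "dcuts d G \<subseteq> Pow (edges G)"
  unfolding dcuts_def edge_cut_def by auto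

lemma max_dcuts_subset_dcuts: "max_dcuts d G \<subseteq> dcuts d G"
  unfolding max_dcuts_def by auto

lemma card_edge_cut_at_le:
  assumes "is_dcut d G A B"
  shows "card {u. {v, u} \<in> edge_cut G A B} \<le> d"
proof -
  have disj: "A \<inter> B = {}" and deg_A: "\<forall>a\<in>A. card (nbrs G a \<inter> B) \<le> d"
    and deg_B: "\<forall>b\<in>B. card (nbrs G b \<inter> A) \<le> d"
    using assms unfolding is_dcut_def is_cut_def by blast+
  consider "v \<in> A" | "v \<in> B" | "v \<notin> A" "v \<notin> B" by blast
  then show ?thesis
  proof cases
    case 1
    with disj have "{u. {v, u} \<in> edge_cut G A B} = nbrs G v \<inter> B"
      unfolding edge_cut_def nbrs_def by (auto simp: doubleton_eq_iff insert_commute)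
    with 1 deg_A show ?thesis by simp
  next
    case 2
    with disj have "{u. {v, u} \<in> edge_cut G A B} = nbrs G v \<inter> A"
      unfolding edge_cut_def nbrs_def by (auto simp: doubleton_eq_iff insert_commute)
    with 2 deg_B show ?thesis by simp
  next
    case 3
    then have "{u. {v, u} \<in> edge_cut G A B} = {}"
      unfolding edge_cut_def by (auto simp: doubleton_eq_iff)
    then show ?thesis by simp
  qed
qed

section \<open>Kernels bound the number of solutions\<close>

lemma power_sum_le_power_mult:
  fixes c n n' p p' q :: nat
  assumes "n' + p' \<le> q"
  shows "c * (n + n' + p + p' + 1) ^ c \<le> c * (p + q + 1) ^ c * (n + 1) ^ c"
proof -
  have "n + n' + p + p' + 1 \<le> (p + q + 1) * (n + 1)"
    using assms by (simp add: algebra_simps)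
  then have "c * (n + n' + p + p' + 1) ^ c \<le> c * ((p + q + 1) * (n + 1)) ^ c"
    by (intro mult_le_mono2 power_mono) simp_all
  also have "\<dots> = c * (p + q + 1) ^ c * (n + 1) ^ c"
    by (simp only: power_mult_distrib mult.assoc)
  finally show ?thesis .
qed

lemma fp_enum_kernel_card_bound:
  assumes kernel: "fp_enum_kernel Sol kappa" and sol_edges: "\<And>x. Sol x \<subseteq> Pow (edges x)"
  obtains F c where "\<And>x. wf_graph x \<Longrightarrow> card (Sol x) \<le> F (kappa x) * (graph_size x + 1) ^ c"
proof -
  obtain K L f c where kernel_at: "\<forall>x. wf_graph x \<longrightarrow>
        wf_graph (K x) \<and>
        graph_size (K x) + kappa (K x) \<le> f (kappa x) \<and>
        (\<forall>s\<in>Sol (K x). L x s \<noteq> {} \<and> L x s \<subseteq> Sol x \<and>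
           card (L x s) \<le> c * (graph_size x + graph_size (K x) + kappa x + kappa (K x) + 1) ^ c) \<and>
        (\<forall>s\<in>Sol (K x). \<forall>s'\<in>Sol (K x). s \<noteq> s' \<longrightarrow> L x s \<inter> L x s' = {}) \<and>
        (\<Union>s\<in>Sol (K x). L x s) = Sol x"
    using kernel unfolding fp_enum_kernel_def by (elim exE) (rule that)
  define F where "F p = 2 ^ f p * (c * (p + f p + 1) ^ c)" for p
  have "card (Sol x) \<le> F (kappa x) * (graph_size x + 1) ^ c" if x: "wf_graph x" for x
  proof -
    let ?n = "graph_size x" and ?p = "kappa x"
    have wfK: "wf_graph (K x)" and small: "graph_size (K x) + kappa (K x) \<le> f ?p"
      and lift: "\<And>s. s \<in> Sol (K x) \<Longrightarrow>
        card (L x s) \<le> c * (?n + graph_size (K x) + ?p + kappa (K x) + 1) ^ c"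
      and cover: "(\<Union>s\<in>Sol (K x). L x s) = Sol x"
      using kernel_at[rule_format, OF x] by blast+
    have "card (Sol (K x)) \<le> 2 ^ graph_size (K x)"
      using wfK sol_edges by (rule card_le_two_power_graph_size)
    also have "\<dots> \<le> 2 ^ f ?p"
      using small by (intro power_increasing) auto
    finally have few_kernel_sols: "card (Sol (K x)) \<le> 2 ^ f ?p" .
    have lift_bound: "card (L x s) \<le> c * (?p + f ?p + 1) ^ c * (?n + 1) ^ c"
      if "s \<in> Sol (K x)" for s
      using lift[OF that] power_sum_le_power_mult[OF small] by (rule le_trans)
    have "card (Sol x) \<le> (\<Sum>s\<in>Sol (K x). card (L x s))"
      unfolding cover[symmetric] using finite_edges[OF wfK] sol_edges
      by (intro card_UN_le) (meson finite_Pow_iff rev_finite_subset)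
    also have "\<dots> \<le> card (Sol (K x)) * (c * (?p + f ?p + 1) ^ c * (?n + 1) ^ c)"
      using sum_bounded_above[OF lift_bound] by simp
    also have "\<dots> \<le> F ?p * (?n + 1) ^ c"
      using few_kernel_sols unfolding F_def by (simp add: mult.assoc)
    finally show ?thesis .
  qed
  then show thesis by (rule that)
qed

section \<open>Star forests\<close>

text \<open>Vertex \<open>l\<close> of the \<open>i\<close>-th star; \<open>l = 0\<close> is its centre, \<open>1, ..., m\<close> its leaves.\<close>
definition star_vx :: "nat \<Rightarrow> nat \<Rightarrow> nat" where
  "star_vx i l = prod_encode (i, l)"

lemma star_vx_eq_iff [simp]: "star_vx i l = star_vx j l' \<longleftrightarrow> i = j \<and> l = l'"
  unfolding star_vx_def by simp

definition star_forest :: "nat \<Rightarrow> nat \<Rightarrow> graph" where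
  "star_forest k m =
    ({star_vx i l | i l. i < k \<and> l \<le> m},
     {{star_vx i 0, star_vx i l} | i l. i < k \<and> 1 \<le> l \<and> l \<le> m})"

lemma verts_star_forest: "verts (star_forest k m) = (\<lambda>(i, l). star_vx i l) ` ({..<k} \<times> {..m})"
  unfolding star_forest_def verts_def by auto

lemma edges_star_forest:
  "edges (star_forest k m) = (\<lambda>(i, l). {star_vx i 0, star_vx i l}) ` ({..<k} \<times> {1..m})"
  unfolding star_forest_def edges_def by fastforce

lemma wf_graph_star_forest: "wf_graph (star_forest k m)"
  unfolding wf_graph_def verts_star_forest edges_star_forest by force

lemma graph_size_star_forest: "graph_size (star_forest k m) + k \<le> 2 * k * (m + 1)"
proof -
  have "card (verts (star_forest k m)) \<le> k * (m + 1)"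
    unfolding verts_star_forest using card_image_le[of "{..<k} \<times> {..m}"] by simp
  moreover have "card (edges (star_forest k m)) \<le> k * m"
    unfolding edges_star_forest using card_image_le[of "{..<k} \<times> {1..m}"] by simp
  ultimately show ?thesis
    unfolding graph_size_def by (simp add: algebra_simps)
qed

lemma star_vx_in_verts [simp]: "star_vx i l \<in> verts (star_forest k m) \<longleftrightarrow> i < k \<and> l \<le> m"
  unfolding verts_star_forest by auto

lemma star_edge_in_edges:
  "i < k \<Longrightarrow> 1 \<le> l \<Longrightarrow> l \<le> m \<Longrightarrow> {star_vx i 0, star_vx i l} \<in> edges (star_forest k m)"
  unfolding edges_star_forest by force

lemma edge_star_forest_iff:
  "{u, w} \<in> edges (star_forest k m) \<longleftrightarrow>
    (\<exists>i l. i < k \<and> 1 \<le> l \<and> l \<le> m \<and>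
      (u = star_vx i 0 \<and> w = star_vx i l \<or> u = star_vx i l \<and> w = star_vx i 0))"
  unfolding star_forest_def edges_def by (auto simp: doubleton_eq_iff)

lemma nbrs_star_center:
  "i < k \<Longrightarrow> nbrs (star_forest k m) (star_vx i 0) = star_vx i ` {1..m}"
  unfolding nbrs_def edge_star_forest_iff by auto

lemma nbrs_star_leaf:
  "i < k \<Longrightarrow> 1 \<le> l \<Longrightarrow> l \<le> m \<Longrightarrow> nbrs (star_forest k m) (star_vx i l) = {star_vx i 0}"
  unfolding nbrs_def edge_star_forest_iff by auto

lemma vc_star_forest: "vc (star_forest k m) \<le> k"
proof -
  have "vertex_cover (star_forest k m) ((\<lambda>i. star_vx i 0) ` {..<k})"
    unfolding vertex_cover_def verts_star_forest edges_star_forest by auto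
  then have "vc (star_forest k m) \<le> card ((\<lambda>i. star_vx i 0) ` {..<k})"
    by (rule vc_le_card[OF wf_graph_star_forest])
  also have "\<dots> \<le> k"
    using card_image_le[of "{..<k}"] by simp
  finally show ?thesis .
qed

definition star_modules :: "nat \<Rightarrow> nat \<Rightarrow> nat set set" where
  "star_modules k m = (\<lambda>i. {star_vx i 0}) ` {..<k} \<union> (\<lambda>i. star_vx i ` {1..m}) ` {..<k}"

lemma star_modules_homogeneous:
  assumes "X \<in> star_modules k m"
  defines "G \<equiv> star_forest k m"
  shows "(is_clique G X \<or> is_indep G X) \<and> (\<forall>u\<in>X. \<forall>v\<in>X. nbrs G u - X = nbrs G v - X)"
proof -
  consider i where "i < k" "X = {star_vx i 0}" | i where "i < k" "X = star_vx i ` {1..m}"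
    using assms(1) unfolding star_modules_def by blast
  then show ?thesis
  proof cases
    case 1
    then show ?thesis by (simp add: is_clique_def)
  next
    case 2
    then have "is_indep G X"
      unfolding is_indep_def G_def edge_star_forest_iff by auto
    moreover have "nbrs G u = {star_vx i 0}" if "u \<in> X" for u
      using that 2 nbrs_star_leaf unfolding G_def by auto
    ultimately show ?thesis by simp
  qed
qed

lemma nd_partition_star_modules:
  assumes "1 \<le> m"
  shows "nd_partition (star_forest k m) (star_modules k m)"
proof -
  let ?P = "star_modules k m"
  have module_determined: "X = (if l = 0 then {star_vx i 0} else star_vx i ` {1..m})"
    if "X \<in> ?P" "star_vx i l \<in> X" for X i l
    using that unfolding star_modules_def by auto
  have nonempty: "X \<noteq> {}" if "X \<in> ?P" for X
    using that assms unfolding star_modules_def by auto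
  have cover: "\<Union> ?P = verts (star_forest k m)"
    unfolding star_modules_def verts_star_forest by (auto simp: le_Suc_eq not_less_eq_eq)
  have disjoint: "X \<inter> Y = {}" if "X \<in> ?P" "Y \<in> ?P" "X \<noteq> Y" for X Y
  proof (rule ccontr)
    assume "X \<inter> Y \<noteq> {}"
    then obtain x where "x \<in> X" "x \<in> Y" by blast
    moreover have "x \<in> verts (star_forest k m)" using \<open>x \<in> X\<close> that(1) cover by blast
    ultimately obtain i l where "star_vx i l \<in> X" "star_vx i l \<in> Y"
      unfolding verts_star_forest by auto
    then show False
      using module_determined[OF that(1)] module_determined[OF that(2)] that(3) by metis
  qed
  show ?thesis
    unfolding nd_partition_def using nonempty disjoint cover star_modules_homogeneous by meson
qed

lemma card_star_modules: "card (star_modules k m) \<le> 2 * k"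
proof -
  have "card (star_modules k m)
      \<le> card ((\<lambda>i. {star_vx i 0}) ` {..<k}) + card ((\<lambda>i. star_vx i ` {1..m}) ` {..<k})"
    unfolding star_modules_def by (rule card_Un_le)
  also have "\<dots> \<le> k + k"
    using card_image_le[of "{..<k}" "\<lambda>i. {star_vx i 0}"]
      card_image_le[of "{..<k}" "\<lambda>i. star_vx i ` {1..m}"]
    by simp
  finally show ?thesis by simp
qed

lemma nd_star_forest: "1 \<le> m \<Longrightarrow> nd (star_forest k m) \<le> 2 * k"
  using nd_le_card[OF wf_graph_star_forest nd_partition_star_modules] card_star_modules
  by (rule le_trans)

section \<open>Maximal d-cuts of star forests\<close>

definition star_cut_leaves :: "nat \<Rightarrow> (nat \<Rightarrow> nat) \<Rightarrow> nat \<Rightarrow> nat set" where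
  "star_cut_leaves d g i = insert (g i) {1..<d}"

definition star_cut_side :: "nat \<Rightarrow> nat \<Rightarrow> (nat \<Rightarrow> nat) \<Rightarrow> nat set" where
  "star_cut_side d k g = {star_vx i l | i l. i < k \<and> l \<in> star_cut_leaves d g i}"

definition star_cut :: "nat \<Rightarrow> nat \<Rightarrow> (nat \<Rightarrow> nat) \<Rightarrow> nat set set" where
  "star_cut d k g = {{star_vx i 0, star_vx i l} | i l. i < k \<and> l \<in> star_cut_leaves d g i}"

context
  fixes d k m :: nat and g :: "nat \<Rightarrow> nat"
  assumes d_pos: "1 \<le> d" and g_range: "g \<in> {..<k} \<rightarrow>\<^sub>E {d..m}"
begin

lemma choice_bounds: "i < k \<Longrightarrow> d \<le> g i \<and> g i \<le> m"
  using PiE_mem[OF g_range, of i] by simp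

lemma star_cut_leaves_subset: "i < k \<Longrightarrow> star_cut_leaves d g i \<subseteq> {1..m}"
  using choice_bounds[of i] d_pos unfolding star_cut_leaves_def by auto

lemma card_star_cut_leaves: "i < k \<Longrightarrow> card (star_cut_leaves d g i) = d"
  using choice_bounds[of i] d_pos unfolding star_cut_leaves_def by simp

lemma star_center_notin_cut_side: "star_vx j 0 \<notin> star_cut_side d k g"
  unfolding star_cut_side_def using star_cut_leaves_subset by fastforce

lemma mem_star_cut_iff:
  "i < k \<Longrightarrow> {star_vx i 0, star_vx i l} \<in> star_cut d k g \<longleftrightarrow> l \<in> star_cut_leaves d g i"
  unfolding star_cut_def using star_cut_leaves_subset by (fastforce simp: doubleton_eq_iff)

lemma card_nbrs_into_star_cut_side_le:
  assumes "a \<in> verts (star_forest k m)" and "a \<notin> star_cut_side d k g"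
  shows "card (nbrs (star_forest k m) a \<inter> star_cut_side d k g) \<le> d"
proof -
  let ?G = "star_forest k m" and ?S = "star_cut_side d k g"
  obtain i l where il: "a = star_vx i l" "i < k" "l \<le> m"
    using assms(1) unfolding verts_star_forest by auto
  show ?thesis
  proof (cases "l = 0")
    case True
    have "nbrs ?G a \<inter> ?S \<subseteq> star_vx i ` star_cut_leaves d g i"
      unfolding il True nbrs_star_center[OF il(2)] star_cut_side_def by auto
    then have "card (nbrs ?G a \<inter> ?S) \<le> card (star_vx i ` star_cut_leaves d g i)"
      by (rule card_mono[rotated]) (simp add: star_cut_leaves_def)
    also have "\<dots> \<le> d"
      using card_image_le[of "star_cut_leaves d g i" "star_vx i"] card_star_cut_leaves[OF il(2)]
      by (simp add: star_cut_leaves_def)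
    finally show ?thesis .
  next
    case False
    then have "nbrs ?G a = {star_vx i 0}"
      using nbrs_star_leaf il by simp
    then show ?thesis
      using star_center_notin_cut_side by simp
  qed
qed

lemma card_nbrs_of_star_cut_side_le:
  assumes "b \<in> star_cut_side d k g"
  shows "card (nbrs (star_forest k m) b \<inter> X) \<le> d"
proof -
  obtain i l where il: "b = star_vx i l" "i < k" "l \<in> star_cut_leaves d g i"
    using assms unfolding star_cut_side_def by auto
  then have "l \<in> {1..m}"
    using star_cut_leaves_subset by blast
  then have "nbrs (star_forest k m) b = {star_vx i 0}"
    unfolding il(1) using nbrs_star_leaf[OF il(2)] by simp
  then have "card (nbrs (star_forest k m) b \<inter> X) \<le> card {star_vx i 0}"
    by (intro card_mono) auto
  then show ?thesis
    using d_pos by simp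
qed

lemma is_dcut_star_cut_side:
  assumes "1 \<le> k"
  defines "G \<equiv> star_forest k m" and "S \<equiv> star_cut_side d k g"
  shows "is_dcut d G (verts G - S) S"
proof -
  have "S \<subseteq> verts G"
    unfolding S_def G_def star_cut_side_def using star_cut_leaves_subset by fastforce
  moreover have "star_vx 0 0 \<in> verts G - S"
    using assms star_center_notin_cut_side unfolding G_def S_def by simp
  moreover have "star_vx 0 (g 0) \<in> S"
    using assms unfolding S_def star_cut_side_def star_cut_leaves_def by auto
  ultimately have "is_cut G (verts G - S) S"
    unfolding is_cut_def by blast
  then show ?thesis
    unfolding is_dcut_def G_def S_def
    using card_nbrs_into_star_cut_side_le card_nbrs_of_star_cut_side_le by blast
qed

lemma edge_cut_star_cut_side:
  defines "G \<equiv> star_forest k m" and "S \<equiv> star_cut_side d k g"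
  shows "edge_cut G (verts G - S) S = star_cut d k g"
proof (intro equalityI subsetI)
  fix e assume "e \<in> edge_cut G (verts G - S) S"
  then obtain b where e: "e \<in> edges G" "b \<in> e" "b \<in> S"
    unfolding edge_cut_def by blast
  then obtain i l where il: "e = {star_vx i 0, star_vx i l}" "i < k"
    unfolding G_def edges_star_forest by auto
  have "b = star_vx i l"
    using e il star_center_notin_cut_side unfolding S_def by blast
  then have "l \<in> star_cut_leaves d g i"
    using e(3) unfolding S_def star_cut_side_def by simp
  then show "e \<in> star_cut d k g"
    unfolding il mem_star_cut_iff[OF il(2)] .
next
  fix e assume "e \<in> star_cut d k g"
  then obtain i l where il: "e = {star_vx i 0, star_vx i l}" "i < k" "l \<in> star_cut_leaves d g i"
    unfolding star_cut_def by auto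
  have "star_vx i 0 \<in> verts G - S" "star_vx i l \<in> S" "e \<in> edges G"
    using il star_cut_leaves_subset[OF il(2)] star_center_notin_cut_side star_edge_in_edges
    unfolding G_def S_def star_cut_side_def by auto
  then show "e \<in> edge_cut G (verts G - S) S"
    unfolding edge_cut_def il by blast
qed

lemma star_cut_in_dcuts: "1 \<le> k \<Longrightarrow> star_cut d k g \<in> dcuts d (star_forest k m)"
  unfolding dcuts_def using is_dcut_star_cut_side edge_cut_star_cut_side by blast

lemma star_cut_in_max_dcuts:
  assumes "1 \<le> k"
  shows "star_cut d k g \<in> max_dcuts d (star_forest k m)"
proof -
  let ?G = "star_forest k m"
  have "\<not> star_cut d k g \<subset> F" if "F \<in> dcuts d ?G" for F
  proof
    assume larger: "star_cut d k g \<subset> F"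
    obtain A B where F: "F = edge_cut ?G A B" "is_dcut d ?G A B"
      using \<open>F \<in> dcuts d ?G\<close> unfolding dcuts_def by blast
    obtain e where e: "e \<in> F" "e \<notin> star_cut d k g"
      using larger by blast
    then obtain i l where il: "e = {star_vx i 0, star_vx i l}" "i < k"
      unfolding F(1) edge_cut_def edges_star_forest by auto
    have new_leaf: "l \<notin> star_cut_leaves d g i"
      using e il mem_star_cut_iff by blast
    define T where "T = star_vx i ` insert l (star_cut_leaves d g i)"
    have "T \<subseteq> {u. {star_vx i 0, u} \<in> F}"
      unfolding T_def using e il larger mem_star_cut_iff[OF il(2)] by auto
    moreover have "{u. {star_vx i 0, u} \<in> F} \<subseteq> nbrs ?G (star_vx i 0)"
      unfolding F(1) edge_cut_def nbrs_def by (auto simp: insert_commute)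
    ultimately have "card T \<le> card {u. {star_vx i 0, u} \<in> F}"
      by (intro card_mono) (auto simp: nbrs_star_center[OF il(2)] intro: finite_subset)
    also have "\<dots> \<le> d"
      unfolding F(1) using F(2) by (rule card_edge_cut_at_le)
    finally have "card T \<le> d" .
    moreover have "card T = d + 1"
      unfolding T_def using new_leaf card_star_cut_leaves[OF il(2)]
      by (subst card_image) (auto simp: inj_on_def star_cut_leaves_def)
    ultimately show False by simp
  qed
  then show ?thesis
    unfolding max_dcuts_def using star_cut_in_dcuts[OF assms] by blast
qed

end

lemma inj_on_star_cut:
  assumes "1 \<le> d"
  shows "inj_on (star_cut d k) ({..<k} \<rightarrow>\<^sub>E {d..m})"
proof (rule inj_onI)
  fix g g' assume g: "g \<in> {..<k} \<rightarrow>\<^sub>E {d..m}" and g': "g' \<in> {..<k} \<rightarrow>\<^sub>E {d..m}"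
    and same_cut: "star_cut d k g = star_cut d k g'"
  show "g = g'"
  proof (rule PiE_ext[OF g g'])
    fix i assume "i \<in> {..<k}"
    then have i: "i < k" by simp
    have "g i \<in> star_cut_leaves d g i"
      unfolding star_cut_leaves_def by simp
    then have "g i \<in> star_cut_leaves d g' i"
      using mem_star_cut_iff[OF assms g i] mem_star_cut_iff[OF assms g' i] same_cut by simp
    then show "g i = g' i"
      using choice_bounds[OF assms g i] unfolding star_cut_leaves_def by auto
  qed
qed

lemma card_max_dcuts_star_forest:
  assumes "1 \<le> d" and "1 \<le> k"
  shows "(m + 1 - d) ^ k \<le> card (max_dcuts d (star_forest k m))"
proof -
  have "finite (max_dcuts d (star_forest k m))"
    using max_dcuts_subset_dcuts dcuts_subset_Pow_edges finite_edges[OF wf_graph_star_forest]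
    by (meson finite_Pow_iff finite_subset)
  moreover have "star_cut d k ` ({..<k} \<rightarrow>\<^sub>E {d..m}) \<subseteq> max_dcuts d (star_forest k m)"
    using star_cut_in_max_dcuts[OF assms(1) _ assms(2)] by blast
  ultimately have "card (star_cut d k ` ({..<k} \<rightarrow>\<^sub>E {d..m})) \<le> card (max_dcuts d (star_forest k m))"
    by (rule card_mono)
  then show ?thesis
    using card_image[OF inj_on_star_cut[OF assms(1)]] by (simp add: card_PiE)
qed

lemma exponential_exceeds_polynomial:
  fixes H a c :: nat
  shows "\<exists>t\<ge>1. H * (a * t) ^ c < t ^ Suc c"
proof (intro exI conjI)
  let ?t = "H * a ^ c + 1"
  have "H * (a * ?t) ^ c = (H * a ^ c) * ?t ^ c"
    by (simp only: power_mult_distrib mult.assoc)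
  also have "\<dots> < ?t * ?t ^ c"
    by simp
  finally show "H * (a * ?t) ^ c < ?t ^ Suc c"
    by simp
qed simp

lemma no_fp_enum_kernel_if_bounded_on_star_forests:
  assumes d_pos: "1 \<le> d"
    and max_sols: "\<And>x. max_dcuts d x \<subseteq> Sol x" and sol_edges: "\<And>x. Sol x \<subseteq> Pow (edges x)"
    and kappa_star_forest: "\<And>k m. 1 \<le> m \<Longrightarrow> kappa (star_forest k m) \<le> 2 * k"
  shows "\<not> fp_enum_kernel Sol kappa"
proof
  assume "fp_enum_kernel Sol kappa"
  then obtain F c where count: "\<And>x. wf_graph x \<Longrightarrow> card (Sol x) \<le> F (kappa x) * (graph_size x + 1) ^ c"
    using sol_edges fp_enum_kernel_card_bound by blast
  define k where "k = Suc c"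
  define H where "H = (\<Sum>p\<le>2 * k. F p)" \<comment> \<open>\<open>F\<close> need not be monotone\<close>
  obtain t where t: "1 \<le> t" "H * (2 * k * (d + 1) * t) ^ c < t ^ k"
    using exponential_exceeds_polynomial unfolding k_def by blast
  define m where "m = t + d - 1"
  let ?G = "star_forest k m"
  have m: "1 \<le> m" "m + 1 = t + d"
    unfolding m_def using t(1) d_pos by simp_all
  have "graph_size ?G + 1 \<le> 2 * k * (m + 1)"
    using graph_size_star_forest[of k m] unfolding k_def by simp
  also have "\<dots> \<le> 2 * k * (d + 1) * t"
    using t(1) unfolding m(2) by (simp add: algebra_simps)
  finally have small_graph: "graph_size ?G + 1 \<le> 2 * k * (d + 1) * t" .
  have "F (kappa ?G) \<le> H"
    unfolding H_def using kappa_star_forest[OF m(1)] by (intro member_le_sum) auto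
  have "finite (Sol ?G)"
    using sol_edges finite_edges[OF wf_graph_star_forest] by (meson finite_Pow_iff finite_subset)
  then have "card (max_dcuts d ?G) \<le> card (Sol ?G)"
    using max_sols by (rule card_mono)
  moreover have "(m + 1 - d) ^ k \<le> card (max_dcuts d ?G)"
    by (rule card_max_dcuts_star_forest[OF d_pos]) (simp add: k_def)
  ultimately have "t ^ k \<le> card (Sol ?G)"
    using m(2) by simp
  also have "\<dots> \<le> F (kappa ?G) * (graph_size ?G + 1) ^ c"
    by (rule count[OF wf_graph_star_forest])
  also have "\<dots> \<le> H * (2 * k * (d + 1) * t) ^ c"
    using \<open>F (kappa ?G) \<le> H\<close> small_graph
    by (intro mult_le_mono power_mono) auto
  finally show False
    using t(2) by simp
qed

theorem proposition18:
  fixes d :: nat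
  assumes "d \<ge> 1"
  shows "\<not> fp_enum_kernel (dcuts d) vc \<and> \<not> fp_enum_kernel (max_dcuts d) vc \<and>
         \<not> fp_enum_kernel (dcuts d) nd \<and> \<not> fp_enum_kernel (max_dcuts d) nd"
proof -
  have vc_bound: "vc (star_forest k m) \<le> 2 * k" for k m
    using vc_star_forest[of k m] by simp
  have max_dcuts_edges: "max_dcuts d x \<subseteq> Pow (edges x)" for x
    using max_dcuts_subset_dcuts dcuts_subset_Pow_edges by blast
  note no_kernel = no_fp_enum_kernel_if_bounded_on_star_forests[OF assms]
  show ?thesis
    using no_kernel[OF max_dcuts_subset_dcuts dcuts_subset_Pow_edges vc_bound]
      no_kernel[OF order_refl max_dcuts_edges vc_bound]
      no_kernel[OF max_dcuts_subset_dcuts dcuts_subset_Pow_edges nd_star_forest]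
      no_kernel[OF order_refl max_dcuts_edges nd_star_forest]
    by blast
qed

end
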